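(* Let $E$ be a complete end of revolution in the hyperbolic space $\mathbb{H}^3$ which is contained in a compact subset of $\mathbb{H}^3$. Then $E$ is a parabolic end.
   Context: A complete end of revolution in $\mathbb{H}^3$: take a geodesic $\sigma$, a totally geodesic plane containing it, and a smooth regular curve $\beta:[0,\infty)\to$ that plane, of infinite length and not meeting $\sigma$; $E$ is the union of the images of $\beta$ under all rotations of $\mathbb{H}^3$ about $\sigma$ (orientation-preserving isometries fixing $\sigma$ pointwise), with the metric induced by the immersion $(t,\theta)\mapsto R_\theta(\beta(t))$ of $[0,\infty)\times\mathbb{S}^1$. An end is parabolic if every bounded harmonic function on it is determined by its boundary values. *)

theory Defs
  imports "HOL-Analysis.Analysis"
begin

definition mink :: "real^4 \<Rightarrow> real^4 \<Rightarrow> real" where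
  "mink x y = - (x$0 * y$0) + x$1 * y$1 + x$2 * y$2 + x$3 * y$3"

definition H3 :: "(real^4) set" where
  "H3 = {x. mink x x = -1 \<and> x$0 > 0}"

definition hgeodesic :: "(real^4) set \<Rightarrow> bool" where
  "hgeodesic S \<longleftrightarrow> (\<exists>V. subspace V \<and> dim V = 2 \<and> S = H3 \<inter> V) \<and> S \<noteq> {}"

definition hplane :: "(real^4) set \<Rightarrow> bool" where
  "hplane S \<longleftrightarrow> (\<exists>W. subspace W \<and> dim W = 3 \<and> S = H3 \<inter> W) \<and> S \<noteq> {}"

definition hisometry :: "(real^4 \<Rightarrow> real^4) \<Rightarrow> bool" where
  "hisometry f \<longleftrightarrow> linear f \<and> (\<forall>x y. mink (f x) (f y) = mink x y) \<and> f ` H3 \<subseteq> H3"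

definition hrotation_about :: "(real^4) set \<Rightarrow> (real^4 \<Rightarrow> real^4) \<Rightarrow> bool" where
  "hrotation_about \<sigma> f \<longleftrightarrow> hisometry f \<and> det (matrix f) > 0 \<and> (\<forall>x\<in>\<sigma>. f x = x)"

text \<open>Parametrisation of the rotations about \<sigma> by the angle: a continuous one-parameter
  group of rotations about \<sigma> with kernel exactly 2\<pi>\<int> (i.e. rotation by angle \<theta>,
  for one of the two orientations).\<close>
definition angle_param :: "(real^4) set \<Rightarrow> (real \<Rightarrow> real^4 \<Rightarrow> real^4) \<Rightarrow> bool" where
  "angle_param \<sigma> R \<longleftrightarrow>
     (\<forall>\<theta>. hrotation_about \<sigma> (R \<theta>)) \<and>
     (\<forall>a b. R (a + b) = R a \<circ> R b) \<and>
     (\<forall>\<theta>. R \<theta> = id \<longleftrightarrow> (\<exists>k::int. \<theta> = 2 * pi * of_int k)) \<and>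
     (\<forall>x. continuous_on UNIV (\<lambda>\<theta>. R \<theta> x))"

fun Ck_halfline :: "nat \<Rightarrow> (real \<Rightarrow> 'a::real_normed_vector) \<Rightarrow> bool" where
  "Ck_halfline 0 g = continuous_on {0..} g"
| "Ck_halfline (Suc k) g = ((\<forall>t\<ge>0. g differentiable (at t within {0..})) \<and>
      Ck_halfline k (\<lambda>t. vector_derivative g (at t within {0..})))"

definition smooth_halfline :: "(real \<Rightarrow> 'a::real_normed_vector) \<Rightarrow> bool" where
  "smooth_halfline g \<longleftrightarrow> (\<forall>k. Ck_halfline k g)"

definition dt :: "(real \<times> real \<Rightarrow> 'a::real_normed_vector) \<Rightarrow> real \<times> real \<Rightarrow> 'a" where
  "dt f x = vector_derivative (\<lambda>s. f (s, snd x)) (at (fst x))"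

definition d\<theta> :: "(real \<times> real \<Rightarrow> 'a::real_normed_vector) \<Rightarrow> real \<times> real \<Rightarrow> 'a" where
  "d\<theta> f x = vector_derivative (\<lambda>s. f (fst x, s)) (at (snd x))"

fun Ck_on :: "nat \<Rightarrow> (real \<times> real) set \<Rightarrow> (real \<times> real \<Rightarrow> 'a::real_normed_vector) \<Rightarrow> bool" where
  "Ck_on 0 S f = continuous_on S f"
| "Ck_on (Suc k) S f = ((\<forall>x\<in>S. (\<lambda>s. f (s, snd x)) differentiable (at (fst x)) \<and>
                                 (\<lambda>s. f (fst x, s)) differentiable (at (snd x))) \<and>
      Ck_on k S (dt f) \<and> Ck_on k S (d\<theta> f))"

text \<open>The immersion (t,\<theta>) \<mapsto> R_\<theta>(\<beta>(t)) of [0,\<infinity>) \<times> S^1 (\<theta> taken mod 2\<pi>).\<close>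
definition rev_imm :: "(real \<Rightarrow> real^4 \<Rightarrow> real^4) \<Rightarrow> (real \<Rightarrow> real^4) \<Rightarrow> real \<times> real \<Rightarrow> real^4" where
  "rev_imm R \<beta> x = R (snd x) (\<beta> (fst x))"

definition g11 where "g11 F x = mink (dt F x) (dt F x)"
definition g12 where "g12 F x = mink (dt F x) (d\<theta> F x)"
definition g22 where "g22 F x = mink (d\<theta> F x) (d\<theta> F x)"
definition gdet where "gdet F x = g11 F x * g22 F x - (g12 F x)^2"

text \<open>Laplace--Beltrami operator (times sqrt det g) in coordinates:
  \<Delta>_g u = (1/sqrt det g) \<partial>_i (sqrt det g g^{ij} \<partial>_j u).\<close>
definition lb_flux_t where
  "lb_flux_t F u x = (g22 F x * dt u x - g12 F x * d\<theta> u x) / sqrt (gdet F x)"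
definition lb_flux_\<theta> where
  "lb_flux_\<theta> F u x = (g11 F x * d\<theta> u x - g12 F x * dt u x) / sqrt (gdet F x)"

definition interior_E :: "(real \<times> real) set" where
  "interior_E = {x. fst x > 0}"

definition harmonic_on_E :: "(real \<times> real \<Rightarrow> real^4) \<Rightarrow> (real \<times> real \<Rightarrow> real) \<Rightarrow> bool" where
  "harmonic_on_E F u \<longleftrightarrow> Ck_on 2 interior_E u \<and>
     (\<forall>x\<in>interior_E. dt (lb_flux_t F u) x + d\<theta> (lb_flux_\<theta> F u) x = 0)"

text \<open>Bounded harmonic functions on E = [0,\<infinity>) \<times> S^1, continuous up to the boundary
  {0} \<times> S^1 (functions on S^1 = 2\<pi>-periodic functions).\<close>
definition bdd_harmonic_E :: "(real \<times> real \<Rightarrow> real^4) \<Rightarrow> (real \<times> real \<Rightarrow> real) \<Rightarrow> bool" where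
  "bdd_harmonic_E F u \<longleftrightarrow>
     (\<forall>t \<theta>. u (t, \<theta> + 2 * pi) = u (t, \<theta>)) \<and>
     continuous_on {x. fst x \<ge> 0} u \<and>
     (\<exists>B. \<forall>x. fst x \<ge> 0 \<longrightarrow> \<bar>u x\<bar> \<le> B) \<and>
     harmonic_on_E F u"

definition parabolic_end :: "(real \<times> real \<Rightarrow> real^4) \<Rightarrow> bool" where
  "parabolic_end F \<longleftrightarrow>
     (\<forall>u v. bdd_harmonic_E F u \<and> bdd_harmonic_E F v \<and> (\<forall>\<theta>. u (0, \<theta>) = v (0, \<theta>))
        \<longrightarrow> (\<forall>x. fst x \<ge> 0 \<longrightarrow> u x = v x))"

end

theory Submission
  imports Defs
begin

text \<open>
  Let \<open>A\<close> generate the rotations about \<open>\<sigma>\<close>. In the coordinates \<open>(t, \<theta>)\<close> the induced metric is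
  diagonal, \<open>|\<beta>'|\<^sup>2 dt\<^sup>2 + |A \<beta>|\<^sup>2 d\<theta>\<^sup>2\<close>, because \<open>A \<beta>\<close> is Minkowski-orthogonal to the plane of
  \<open>\<beta>\<close>; so harmonic functions solve \<open>(a u\<^sub>t)\<^sub>t + b u\<^sub>\<theta>\<^sub>\<theta> = 0\<close> with \<open>a = |A \<beta>| / |\<beta>'|\<close> and
  \<open>b = 1/a\<close>. On the compact set containing the end \<open>|A \<beta>|\<close> is bounded, so
  \<open>\<integral>\<^sub>0\<^sup>\<infinity> b \<ge> length \<beta> / sup |A \<beta>| = \<infinity>\<close>. For such coefficients the barrier
  \<open>-\<epsilon> \<phi> + \<delta> \<phi>\<^sup>2\<close> with \<open>\<phi>(t) = \<integral>\<^sub>0\<^sup>t b\<close> yields a maximum principle for bounded solutions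
  on the half-cylinder, hence uniqueness given the boundary values.
\<close>

section \<open>Minkowski form\<close>

lemma mink_sym: "mink x y = mink y x" by (simp add: mink_def algebra_simps)
lemma mink_add_left: "mink (x + y) z = mink x z + mink y z" by (simp add: mink_def algebra_simps)
lemma mink_add_right: "mink z (x + y) = mink z x + mink z y" by (simp add: mink_def algebra_simps)
lemma mink_diff_left: "mink (x - y) z = mink x z - mink y z" by (simp add: mink_def algebra_simps)
lemma mink_diff_right: "mink z (x - y) = mink z x - mink z y" by (simp add: mink_def algebra_simps)
lemma mink_scale_left: "mink (c *\<^sub>R x) z = c * mink x z" by (simp add: mink_def algebra_simps)
lemma mink_scale_right: "mink z (c *\<^sub>R x) = c * mink z x" by (simp add: mink_def algebra_simps)
lemma mink_zero_left [simp]: "mink 0 z = 0" by (simp add: mink_def)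
lemma mink_zero_right [simp]: "mink z 0 = 0" by (simp add: mink_def)
lemmas mink_simps = mink_add_left mink_add_right mink_diff_left mink_diff_right
  mink_scale_left mink_scale_right

lemma linear_mink_left: "linear (\<lambda>x. mink x y)"
  by (rule linearI) (simp_all add: mink_simps)

lemma linear_mink_right: "linear (\<lambda>y. mink x y)"
  by (rule linearI) (simp_all add: mink_simps)

lemma bounded_bilinear_mink: "bounded_bilinear mink"
  by (simp add: bilinear_conv_bounded_bilinear[symmetric] bilinear_def
      linear_mink_left linear_mink_right)

lemma has_vector_derivative_mink:
  assumes "(f has_vector_derivative f') (at x within s)" "(g has_vector_derivative g') (at x within s)"
  shows "((\<lambda>x. mink (f x) (g x)) has_vector_derivative (mink (f x) g' + mink f' (g x))) (at x within s)"
  by (rule bounded_bilinear.has_vector_derivative[OF bounded_bilinear_mink assms])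

lemma continuous_on_mink:
  "continuous_on S f \<Longrightarrow> continuous_on S g \<Longrightarrow> continuous_on S (\<lambda>x. mink (f x) (g x))"
  by (rule bounded_bilinear.continuous_on[OF bounded_bilinear_mink])

lemma four_eq_zero_type_4: "(4::4) = 0" by simp

lemma vec4_eq_0_iff: "(y::real^4) = 0 \<longleftrightarrow> y$0 = 0 \<and> y$1 = 0 \<and> y$2 = 0 \<and> y$3 = 0"
proof -
  have "(y = 0) \<longleftrightarrow> (\<forall>i::4. y$i = 0)" by (simp add: vec_eq_iff)
  also have "\<dots> \<longleftrightarrow> y$1 = 0 \<and> y$2 = 0 \<and> y$3 = 0 \<and> y$4 = 0" by (simp add: forall_4)
  finally show ?thesis by (simp add: four_eq_zero_type_4 conj_commute conj_left_commute)
qed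

text \<open>Reverse Cauchy--Schwarz inequality, in coordinates.\<close>
lemma orth_timelike_coords_spacelike:
  fixes a b1 b2 b3 c0 c1 c2 c3 :: real
  assumes timelike: "b1^2 + b2^2 + b3^2 < a^2"
    and orth: "a * c0 = b1*c1 + b2*c2 + b3*c3"
    and nz: "c0 \<noteq> 0 \<or> c1 \<noteq> 0 \<or> c2 \<noteq> 0 \<or> c3 \<noteq> 0"
  shows "c0^2 < c1^2 + c2^2 + c3^2"
proof (rule ccontr)
  assume not_spacelike: "\<not> c0^2 < c1^2 + c2^2 + c3^2"
  define S where "S = c1^2 + c2^2 + c3^2"
  define B where "B = b1^2 + b2^2 + b3^2"
  have lagrange: "(b1*c1 + b2*c2 + b3*c3)^2 \<le> B * S"
  proof -
    have "B * S - (b1*c1 + b2*c2 + b3*c3)^2 = (b1*c2-b2*c1)^2 + (b1*c3-b3*c1)^2 + (b2*c3-b3*c2)^2"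
      unfolding B_def S_def by (simp add: power2_eq_square algebra_simps)
    then show ?thesis by (smt (verit) zero_le_power2)
  qed
  have a2: "0 < a^2" using timelike unfolding B_def by (smt (verit) zero_le_power2)
  show False
  proof (cases "S = 0")
    case True
    then have "c1 = 0" "c2 = 0" "c3 = 0"
      unfolding S_def by (simp_all add: sum_power2_eq_zero_iff add_nonneg_eq_0_iff)
    then have "c0 = 0" using orth a2 by simp
    then show False using nz \<open>c1 = 0\<close> \<open>c2 = 0\<close> \<open>c3 = 0\<close> by simp
  next
    case False
    then have S0: "0 < S" unfolding S_def by (metis add_nonneg_nonneg le_less zero_le_power2)
    have "a^2 * c0^2 = (b1*c1 + b2*c2 + b3*c3)^2" using orth by (metis power_mult_distrib)
    also have "\<dots> \<le> B * S" by (rule lagrange)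
    also have "\<dots> < a^2 * S" using timelike S0 unfolding B_def by (simp add: mult_strict_right_mono)
    also have "\<dots> \<le> a^2 * c0^2" using not_spacelike a2 unfolding S_def by (simp add: mult_left_mono)
    finally show False by simp
  qed
qed

lemma mink_orth_timelike_imp_spacelike:
  fixes x y :: "real^4"
  assumes "mink x x < 0" "mink x y = 0" "y \<noteq> 0"
  shows "mink y y > 0"
proof -
  have "(y$0)^2 < (y$1)^2 + (y$2)^2 + (y$3)^2"
    using assms vec4_eq_0_iff[of y]
    by (intro orth_timelike_coords_spacelike[of "x$1" "x$2" "x$3" "x$0"])
      (auto simp: mink_def power2_eq_square algebra_simps)
  then show ?thesis by (simp add: mink_def power2_eq_square)
qed

lemma H3_mink_neg: "x \<in> H3 \<Longrightarrow> mink x x < 0" by (simp add: H3_def)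

lemma H3_nonzero: "x \<in> H3 \<Longrightarrow> x \<noteq> 0" by (auto simp: H3_def)

definition flip_time :: "real^4 \<Rightarrow> real^4" where
  "flip_time v = (\<chi> i. if i = 0 then - (v$i) else v$i)"

lemma mink_flip_time_left: "mink (flip_time u) w = inner u w"
  by (simp add: flip_time_def mink_def inner_vec_def sum_4 four_eq_zero_type_4)

lemma mink_flip_time_right_self: "mink w (flip_time w) = inner w w"
  by (simp add: flip_time_def mink_def inner_vec_def sum_4 four_eq_zero_type_4)

lemma flip_time_eq_0_iff [simp]: "flip_time u = 0 \<longleftrightarrow> u = 0"
  by (auto simp: flip_time_def vec_eq_iff)

section \<open>Generators of continuous linear flows\<close>

lemma norm_linear_le_Basis_bound:
  fixes L :: "'a::euclidean_space \<Rightarrow> 'b::real_normed_vector" and e :: real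
  assumes "linear L" and "\<And>b. b \<in> Basis \<Longrightarrow> norm (L b) \<le> e"
  shows "norm (L x) \<le> real DIM('a) * e * norm x"
proof -
  have "L x = L (\<Sum>b\<in>Basis. (x \<bullet> b) *\<^sub>R b)" by (simp add: euclidean_representation)
  also have "\<dots> = (\<Sum>b\<in>Basis. (x \<bullet> b) *\<^sub>R L b)"
    using assms(1) by (simp add: linear_sum linear_scale)
  finally have "norm (L x) \<le> (\<Sum>b\<in>Basis. norm ((x \<bullet> b) *\<^sub>R L b))"
    by (metis norm_sum)
  also have "\<dots> \<le> (\<Sum>b\<in>(Basis::'a set). norm x * e)"
    by (intro sum_mono) (auto intro!: mult_mono simp: Basis_le_norm assms(2))
  finally show ?thesis by (simp add: mult.commute mult.left_commute)
qed

lemma continuous_linear_flow_near_id: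
  fixes R :: "real \<Rightarrow> 'a::euclidean_space \<Rightarrow> 'a"
  assumes lin: "\<And>\<theta>. linear (R \<theta>)" and R0: "R 0 = id"
    and cont: "\<And>x. continuous_on UNIV (\<lambda>\<theta>. R \<theta> x)"
  shows "\<exists>h>0. \<forall>s\<in>{0..h}. \<forall>x. norm (R s x - x) \<le> norm x / 2"
proof -
  define e where "e = 1 / (2 * real DIM('a))"
  have e: "e > 0" "real DIM('a) * e = 1/2" unfolding e_def by simp_all
  have "\<forall>\<^sub>F s in at 0. \<forall>b\<in>Basis. dist (R s b) b < e"
  proof (rule eventually_ball_finite)
    show "\<forall>b\<in>Basis. \<forall>\<^sub>F s in at 0. dist (R s b) b < e"
    proof
      fix b :: 'a
      have "((\<lambda>s. R s b) \<longlongrightarrow> R 0 b) (at 0)" using cont[of b] by (simp add: continuous_on_def)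
      then show "\<forall>\<^sub>F s in at 0. dist (R s b) b < e" using R0 e(1) by (auto dest: tendstoD)
    qed
  qed simp
  then obtain d where d: "d > 0"
    "\<And>s. s \<noteq> 0 \<Longrightarrow> dist s 0 < d \<Longrightarrow> \<forall>b\<in>Basis. dist (R s b) b < e"
    by (auto simp: eventually_at)
  have "norm (R s x - x) \<le> norm x / 2" if s: "s \<in> {0..d/2}" for s x
  proof (cases "s = 0")
    case True then show ?thesis using R0 by simp
  next
    case False
    then have "\<And>b. b \<in> Basis \<Longrightarrow> norm ((\<lambda>x. R s x - x) b) \<le> e"
      using d s by (auto simp: dist_norm less_imp_le)
    moreover have "linear (\<lambda>x. R s x - x)"
      using lin[of s] by (intro linear_compose_sub linear_ident) auto
    ultimately have "norm (R s x - x) \<le> real DIM('a) * e * norm x"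
      using norm_linear_le_Basis_bound[of "\<lambda>x. R s x - x" e x] by simp
    then show ?thesis using e(2) by simp
  qed
  then show ?thesis using d by (intro exI[of _ "d/2"]) auto
qed

lemma flow_average_linear_inj:
  fixes R :: "real \<Rightarrow> 'a::euclidean_space \<Rightarrow> 'a"
  assumes lin: "\<And>\<theta>. linear (R \<theta>)" and cont: "\<And>x. continuous_on UNIV (\<lambda>\<theta>. R \<theta> x)"
    and h: "h > 0" and near_id: "\<And>s x. s \<in> {0..h} \<Longrightarrow> norm (R s x - x) \<le> norm x / 2"
  shows "linear (\<lambda>y. integral {0..h} (\<lambda>s. R s y))" "inj (\<lambda>y. integral {0..h} (\<lambda>s. R s y))"
proof -
  have intg: "\<And>y. (\<lambda>s. R s y) integrable_on {0..h}"
    using cont by (intro integrable_continuous_real) (auto intro: continuous_on_subset)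
  show linN: "linear (\<lambda>y. integral {0..h} (\<lambda>s. R s y))"
    using lin by (intro linearI) (simp_all add: linear_add linear_scale integral_add intg)
  show "inj (\<lambda>y. integral {0..h} (\<lambda>s. R s y))"
  proof (rule linear_inj_iff_eq_0[OF linN, THEN iffD2], intro allI impI)
    fix y assume N0: "integral {0..h} (\<lambda>s. R s y) = 0"
    have "((\<lambda>s. R s y) has_integral 0) {0..h}"
      using integrable_integral[OF intg[of y]] N0 by simp
    from has_integral_diff[OF this has_integral_const_real[of y 0 h]]
    have "((\<lambda>s. R s y - y) has_integral (0 - h *\<^sub>R y)) (cbox 0 h)" using h by simp
    from has_integral_bound[OF _ this, of "norm y / 2"] h near_id
    have "h * norm y \<le> norm y / 2 * h" by auto
    then show "y = 0" using h by (simp add: mult.commute)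
  qed
qed

text \<open>Averaging the orbit of \<open>y\<close> over \<open>[0, h]\<close> makes it differentiable in the flow parameter,
  since the flow turns the average into an integral over a moving window.\<close>
lemma flow_average_has_vector_derivative:
  fixes R :: "real \<Rightarrow> 'a::euclidean_space \<Rightarrow> 'a"
  assumes lin: "\<And>\<theta>. linear (R \<theta>)" and grp: "\<And>a b. R (a + b) = R a \<circ> R b"
    and cont: "\<And>x. continuous_on UNIV (\<lambda>\<theta>. R \<theta> x)" and h: "h \<ge> 0"
  shows "((\<lambda>k. R k (integral {0..h} (\<lambda>s. R s y))) has_vector_derivative R (\<theta> + h) y - R \<theta> y) (at \<theta>)"
proof -
  have intg: "\<And>a b. (\<lambda>s. R s y) integrable_on {a..b}"
    using cont by (intro integrable_continuous_real) (auto intro: continuous_on_subset)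
  define G where "G c = integral {\<theta>-1..c} (\<lambda>s. R s y)" for c
  have G_deriv: "(G has_vector_derivative R c y) (at c)" if "c > \<theta> - 1" for c
  proof -
    have "(G has_vector_derivative R c y) (at c within {\<theta>-1..c+1})"
      unfolding G_def using that cont
      by (intro integral_has_vector_derivative) (auto intro: continuous_on_subset)
    moreover have "at c within {\<theta>-1..c+1} = at c" using that by (intro at_within_interior) simp
    ultimately show ?thesis by simp
  qed
  have window: "R k (integral {0..h} (\<lambda>s. R s y)) = G (k + h) - G k" if "k \<in> ball \<theta> 1" for k
  proof -
    have "R k (integral {0..h} (\<lambda>s. R s y)) = integral {0..h} (R k \<circ> (\<lambda>s. R s y))"
      using lin[of k] by (simp add: integral_linear intg linear_conv_bounded_linear)
    also have "\<dots> = integral {0..h} ((\<lambda>s. R s y) \<circ> (+) k)"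
      by (rule arg_cong[where f="integral _"]) (auto simp: grp)
    also have "\<dots> = integral {k..k+h} (\<lambda>s. R s y)"
      by (simp add: integral_shift_Icc_real add.commute)
    also have "\<dots> = G (k + h) - G k"
    proof -
      have "k \<in> {\<theta>-1<..<\<theta>+1}" using that by (auto simp: dist_real_def)
      then have "integral {\<theta>-1..k} (\<lambda>s. R s y) + integral {k..k+h} (\<lambda>s. R s y)
          = integral {\<theta>-1..k+h} (\<lambda>s. R s y)"
        using h by (intro Henstock_Kurzweil_Integration.integral_combine intg) auto
      then show ?thesis by (simp add: G_def algebra_simps)
    qed
    finally show ?thesis .
  qed
  have "((\<lambda>k. k + h) has_vector_derivative 1) (at \<theta>)"
    using has_vector_derivative_add[OF has_vector_derivative_id has_vector_derivative_const[of h]]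
    by simp
  from vector_diff_chain_at[OF this, of G "R (\<theta> + h) y"]
  have "((\<lambda>k. G (k + h)) has_vector_derivative R (\<theta> + h) y) (at \<theta>)"
    using G_deriv[of "\<theta> + h"] h by (simp add: o_def)
  then have "((\<lambda>k. G (k + h) - G k) has_vector_derivative R (\<theta> + h) y - R \<theta> y) (at \<theta>)"
    by (intro has_vector_derivative_diff G_deriv) auto
  then show ?thesis
    by (rule has_vector_derivative_transform_within_open[of _ _ _ "ball \<theta> 1"]) (auto simp: window)
qed

definition flow_generator :: "(real \<Rightarrow> 'a::real_normed_vector \<Rightarrow> 'a) \<Rightarrow> ('a \<Rightarrow> 'a) \<Rightarrow> bool" where
  "flow_generator R A \<longleftrightarrow>
     linear A \<and> (\<forall>x \<theta>. ((\<lambda>s. R s x) has_vector_derivative R \<theta> (A x)) (at \<theta>))"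

text \<open>The generator is \<open>A = (R h - id) \<circ> N\<inverse>\<close> for the average \<open>N\<close> of the flow over \<open>[0, h]\<close>.\<close>
lemma continuous_linear_flow_has_generator:
  fixes R :: "real \<Rightarrow> 'a::euclidean_space \<Rightarrow> 'a"
  assumes lin: "\<And>\<theta>. linear (R \<theta>)" and grp: "\<And>a b. R (a + b) = R a \<circ> R b" and R0: "R 0 = id"
    and cont: "\<And>x. continuous_on UNIV (\<lambda>\<theta>. R \<theta> x)"
  shows "\<exists>A. flow_generator R A"
proof -
  obtain h where h: "h > 0" "\<And>s x. s \<in> {0..h} \<Longrightarrow> norm (R s x - x) \<le> norm x / 2"
    using continuous_linear_flow_near_id[OF lin R0 cont] by blast
  define N where "N y = integral {0..h} (\<lambda>s. R s y)" for y
  have linN: "linear N" and injN: "inj N"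
    using flow_average_linear_inj[OF lin cont h] unfolding N_def[abs_def] by blast+
  obtain g where g: "linear g" "N \<circ> g = id"
    using linear_surjective_right_inverse[OF linN linear_injective_imp_surjective[OF linN injN]]
    by auto
  define A where "A x = R h (g x) - g x" for x
  have "linear A"
    unfolding A_def using linear_compose_sub[OF linear_compose[OF g(1) lin[of h]] g(1)]
    by (simp add: o_def)
  moreover have "((\<lambda>s. R s x) has_vector_derivative R \<theta> (A x)) (at \<theta>)" for x \<theta>
  proof -
    have "x = N (g x)" using g(2) by (metis comp_apply id_apply)
    moreover have "R (\<theta> + h) (g x) - R \<theta> (g x) = R \<theta> (A x)"
      unfolding A_def using grp[of \<theta> h] lin[of \<theta>] by (simp add: linear_diff)
    ultimately show ?thesis
      using flow_average_has_vector_derivative[OF lin grp cont, of h "g x" \<theta>] h(1)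
      unfolding N_def by simp
  qed
  ultimately show ?thesis unfolding flow_generator_def by blast
qed

section \<open>Rotations about a geodesic\<close>

lemma angle_paramD:
  assumes rot: "angle_param \<sigma> R"
  shows "R 0 = id" "linear (R \<theta>)" "mink (R \<theta> x) (R \<theta> y) = mink x y"
    "x \<in> \<sigma> \<Longrightarrow> R \<theta> x = x" "R (a + b) = R a \<circ> R b"
    "continuous_on UNIV (\<lambda>\<theta>. R \<theta> x)" "R pi \<noteq> id"
proof -
  show "R 0 = id" using rot unfolding angle_param_def by (metis mult_zero_right of_int_0)
  show "linear (R \<theta>)" "mink (R \<theta> x) (R \<theta> y) = mink x y"
    "x \<in> \<sigma> \<Longrightarrow> R \<theta> x = x" "R (a + b) = R a \<circ> R b" "continuous_on UNIV (\<lambda>\<theta>. R \<theta> x)"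
    using rot unfolding angle_param_def hrotation_about_def hisometry_def by auto
  show "R pi \<noteq> id"
  proof
    assume "R pi = id"
    then obtain k :: int where "pi = 2 * pi * of_int k" using rot unfolding angle_param_def by blast
    then have "1 = 2 * (of_int k :: real)"
      by (metis mult.commute mult_cancel_left1 pi_neq_zero mult.assoc)
    then have "(1::int) = 2 * k" by (metis of_int_1 of_int_eq_iff of_int_mult of_int_numeral)
    then show False by presburger
  qed
qed

lemma angle_param_has_generator:
  assumes "angle_param \<sigma> R"
  obtains A where "flow_generator R A"
  using continuous_linear_flow_has_generator[OF angle_paramD(2,5,1,6)[OF assms]] by blast

lemma has_vector_derivative_const_imp_zero:
  assumes "((\<lambda>s. c) has_vector_derivative v) (at t)"
  shows "v = (0::'a::real_normed_vector)"
  using vector_derivative_unique_at[OF assms has_vector_derivative_const] .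

lemma angle_param_generator_skew:
  assumes rot: "angle_param \<sigma> R" and gen: "flow_generator R A"
  shows "mink (A u) v = - mink u (A v)"
proof -
  have "((\<lambda>s. mink (R s u) (R s v)) has_vector_derivative
      (mink (R 0 u) (R 0 (A v)) + mink (R 0 (A u)) (R 0 v))) (at 0)"
    using gen unfolding flow_generator_def by (intro has_vector_derivative_mink) auto
  then have "mink (R 0 u) (R 0 (A v)) + mink (R 0 (A u)) (R 0 v) = 0"
    using angle_paramD(3)[OF rot] by (simp add: has_vector_derivative_const_imp_zero)
  then show ?thesis using angle_paramD(1)[OF rot] by simp
qed

lemma angle_param_generator_axis:
  assumes rot: "angle_param \<sigma> R" and gen: "flow_generator R A" and x: "x \<in> \<sigma>"
  shows "A x = 0"
proof -
  have "((\<lambda>s. R s x) has_vector_derivative R 0 (A x)) (at 0)"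
    using gen unfolding flow_generator_def by blast
  then show ?thesis
    using angle_paramD(1,4)[OF rot] x by (simp add: has_vector_derivative_const_imp_zero)
qed

lemma flow_fixes_generator_kernel:
  assumes lin: "\<And>\<theta>. linear (R \<theta>)" and R0: "R 0 = id" and gen: "flow_generator R A" and Ap: "A p = 0"
  shows "R \<theta> p = p"
proof -
  have "\<exists>c. \<forall>s\<in>UNIV. R s p = c"
  proof (rule has_derivative_zero_constant)
    fix s :: real
    have "((\<lambda>s. R s p) has_vector_derivative R s (A p)) (at s)"
      using gen unfolding flow_generator_def by blast
    moreover have "linear (R s)" "linear A" using lin gen unfolding flow_generator_def by blast+
    ultimately show "((\<lambda>s. R s p) has_derivative (\<lambda>h. 0)) (at s within UNIV)"
      using Ap by (simp add: has_vector_derivative_def linear_0)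
  qed simp
  then show ?thesis using R0 by (metis UNIV_I id_apply)
qed

text \<open>A rotation that fixes a hyperplane meeting \<open>H3\<close> pointwise is the identity or the
  reflection in it, so it has order at most 2; but the rotation by \<open>\<pi>/2\<close> has order 4.\<close>
lemma angle_param_no_fixed_hyperplane:
  assumes rot: "angle_param \<sigma> R"
    and W: "subspace W" "dim W = 3" and xW: "x \<in> W" "x \<in> H3"
    and fixW: "\<And>\<theta> w. w \<in> W \<Longrightarrow> R \<theta> w = w"
  shows False
proof -
  note rb = angle_paramD[OF rot]
  have "dim W < DIM(real^4)" using W(2) by simp
  then obtain m :: "real^4" where m: "m \<noteq> 0" "\<And>y. y \<in> span W \<Longrightarrow> orthogonal m y"
    by (rule orthogonal_to_subspace_exists) blast
  define n where "n = flip_time m"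
  have nW: "mink n w = 0" if "w \<in> W" for w
    using m(2)[of w] that span_superset[of W] unfolding n_def orthogonal_def mink_flip_time_left
    by auto
  have nn: "mink n n > 0"
    using mink_orth_timelike_imp_spacelike[OF H3_mink_neg[OF xW(2)], of n] nW[OF xW(1)] m(1)
    by (simp add: mink_sym n_def)
  then have "n \<notin> W" using nW by force
  then have "dim (insert n W) = 4" using W by (simp add: dim_insert span_eq_iff[THEN iffD2])
  then have full: "span (insert n W) = UNIV" using dim_eq_full[of "insert n W"] by simp
  have reflect: "\<exists>c. R \<theta> n = c *\<^sub>R n \<and> c^2 = 1" for \<theta>
  proof -
    obtain c where c: "R \<theta> n - c *\<^sub>R n \<in> W"
      using full span_insert[of n W] W(1) by (auto simp: span_eq_iff[THEN iffD2])
    have "mink (R \<theta> n - c *\<^sub>R n) y = 0" if "y \<in> span (insert n W)" for y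
      using that
    proof (induct rule: span_induct)
      case base
      show ?case unfolding subspace_def by (simp add: mink_simps algebra_simps)
    next
      case (step y)
      then show ?case
      proof
        assume "y = n"
        then show ?thesis using nW[OF c] by (simp add: mink_sym)
      next
        assume yW: "y \<in> W"
        have "mink (R \<theta> n) y = mink (R \<theta> n) (R \<theta> y)" using fixW[OF yW] by simp
        then show ?thesis using nW[OF yW] by (simp add: mink_simps rb(3))
      qed
    qed
    then have "R \<theta> n = c *\<^sub>R n"
      using full mink_flip_time_right_self[of "R \<theta> n - c *\<^sub>R n"] by simp
    moreover have "mink n n = mink (R \<theta> n) (R \<theta> n)" by (simp add: rb(3))
    ultimately have "c^2 = 1" using nn by (simp add: mink_simps power2_eq_square)
    with \<open>R \<theta> n = c *\<^sub>R n\<close> show ?thesis by blast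
  qed
  obtain c where c: "R (pi/2) n = c *\<^sub>R n" "c^2 = 1" using reflect by blast
  have "R pi n = R (pi/2) (R (pi/2) n)" using rb(5)[of "pi/2" "pi/2"] by simp
  also have "\<dots> = c^2 *\<^sub>R n" using c(1) linear_scale[OF rb(2)] by (simp add: power2_eq_square)
  finally have "R pi y = id y" if "y \<in> insert n W" for y using c(2) fixW that by auto
  then have "R pi y = id y" for y
    using linear_eq_on_span[OF rb(2)[of pi] linear_id] full by blast
  then show False using rb(7) by auto
qed

lemma hgeodesic_unit_normal:
  assumes "hgeodesic \<sigma>"
  obtains V x e where "subspace V" "\<sigma> = H3 \<inter> V" "x \<in> \<sigma>" "e \<in> V" "mink x e = 0" "mink e e = 1"
proof -
  obtain V where V: "subspace V" "dim V = 2" "\<sigma> = H3 \<inter> V" and ne: "\<sigma> \<noteq> {}"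
    using assms unfolding hgeodesic_def by blast
  obtain x where x: "x \<in> \<sigma>" using ne by blast
  have xH: "x \<in> H3" "x \<in> V" using x V by auto
  have mxx: "mink x x = -1" using xH by (simp add: H3_def)
  obtain y where y: "y \<in> V" "y \<notin> span {x}"
  proof (rule ccontr)
    assume "\<not> thesis"
    then have "V \<subseteq> span {x}" using that by blast
    then have "dim V \<le> dim (span {x})" by (rule dim_subset)
    also have "\<dots> \<le> 1" by (simp add: dim_insert)
    finally show False using V by simp
  qed
  define y' where "y' = y + mink y x *\<^sub>R x"
  have y'V: "y' \<in> V" unfolding y'_def using V(1) y(1) xH(2) by (simp add: subspace_add subspace_scale)
  have my'x: "mink x y' = 0" unfolding y'_def using mxx by (simp add: mink_simps mink_sym)
  have "y' \<noteq> 0"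
  proof
    assume "y' = 0"
    then have "y = (- mink y x) *\<^sub>R x" unfolding y'_def by (simp add: add_eq_0_iff2)
    then show False using y(2) by (metis span_base span_scale singletonI)
  qed
  then have py: "mink y' y' > 0"
    using mink_orth_timelike_imp_spacelike[OF H3_mink_neg[OF xH(1)] my'x] by simp
  define e where "e = (1 / sqrt (mink y' y')) *\<^sub>R y'"
  have "mink e e = 1"
    unfolding e_def using py by (simp add: mink_simps power2_eq_square[symmetric])
  moreover have "mink x e = 0" unfolding e_def using my'x by (simp add: mink_simps)
  moreover have "e \<in> V" unfolding e_def using V(1) y'V by (simp add: subspace_scale)
  ultimately show ?thesis using that V x by blast
qed

text \<open>The witness is \<open>z = 2 x \<plusminus> \<surd>3 e\<close>, the sign chosen so that \<open>z\<close> lies on the upper sheet.\<close>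
lemma hgeodesic_two_points:
  assumes "hgeodesic \<sigma>"
  obtains V x z where "subspace V" "\<sigma> = H3 \<inter> V" "x \<in> \<sigma>" "z \<in> \<sigma>" "z \<notin> span {x}"
proof -
  obtain V x e where V: "subspace V" "\<sigma> = H3 \<inter> V" and x: "x \<in> \<sigma>"
    and e: "e \<in> V" "mink x e = 0" "mink e e = 1"
    using hgeodesic_unit_normal[OF assms] by blast
  have mxx: "mink x x = -1" and x0: "x$0 > 0" using x V by (auto simp: H3_def)
  obtain s where s: "s \<in> {sqrt 3, - sqrt 3}" "(2 *\<^sub>R x + s *\<^sub>R e)$0 > 0"
  proof -
    have "(2 *\<^sub>R x + sqrt 3 *\<^sub>R e)$0 + (2 *\<^sub>R x + (- sqrt 3) *\<^sub>R e)$0 = 4 * x$0" by simp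
    then show thesis using that x0 by (smt (verit) insertI1 insertI2 singletonI)
  qed
  define z where "z = 2 *\<^sub>R x + s *\<^sub>R e"
  have "s^2 = 3" using s(1) by auto
  then have "mink z z = -1"
    unfolding z_def using mxx e by (simp add: mink_simps mink_sym power2_eq_square)
  moreover have "z \<in> V" unfolding z_def using V(1) x V e(1)
    by (auto simp: subspace_add subspace_scale)
  ultimately have "z \<in> \<sigma>" using s(2) V(2) unfolding z_def by (simp add: H3_def)
  moreover have "z \<notin> span {x}"
  proof
    have mze: "mink z e = s" unfolding z_def using e by (simp add: mink_simps)
    assume "z \<in> span {x}"
    then obtain c where "z = c *\<^sub>R x" by (auto simp: span_singleton)
    then have "mink z e = 0" using e by (simp add: mink_simps)
    then show False using mze s(1) by auto
  qed
  ultimately show ?thesis using that V x by blast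
qed

lemma rotation_generator_normal_to_plane:
  assumes geod: "hgeodesic \<sigma>" and plane: "hplane P" and sub: "\<sigma> \<subseteq> P"
    and rot: "angle_param \<sigma> R" and gen: "flow_generator R A"
  obtains W where "subspace W" "P = H3 \<inter> W"
    "\<And>p. p \<in> P - \<sigma> \<Longrightarrow> A p \<noteq> 0" "\<And>p w. p \<in> P - \<sigma> \<Longrightarrow> w \<in> W \<Longrightarrow> mink (A p) w = 0"
proof -
  obtain V x z where V: "subspace V" "\<sigma> = H3 \<inter> V" and xz: "x \<in> \<sigma>" "z \<in> \<sigma>" "z \<notin> span {x}"
    using hgeodesic_two_points[OF geod] by metis
  obtain W where W: "subspace W" "dim W = 3" "P = H3 \<inter> W"
    using plane unfolding hplane_def by blast
  have xzW: "x \<in> W" "z \<in> W" and xH: "x \<in> H3" using xz sub W V by auto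
  have Axz: "A x = 0" "A z = 0" using angle_param_generator_axis[OF rot gen] xz by auto
  have W_span: "W = span {p, z, x}" if p: "p \<in> P - \<sigma>" for p
  proof (rule subspace_dim_equal[symmetric])
    have "span {z, x} \<subseteq> V" using V xz by (intro span_minimal) auto
    then have "p \<notin> span {z, x}" using p V W by auto
    then have "dim {p, z, x} = 3" using xz(3) H3_nonzero[OF xH] by (simp add: dim_insert)
    then show "dim W \<le> dim (span {p, z, x})" using W(2) by simp
    show "span {p, z, x} \<subseteq> W" using W p xzW by (intro span_minimal) auto
  qed (simp_all add: W(1))
  have orth: "mink (A p) w = 0" if p: "p \<in> P - \<sigma>" and w: "w \<in> W" for p w
  proof -
    have "w \<in> span {p, z, x}" using W_span[OF p] w by simp
    then show ?thesis
    proof (induct rule: span_induct)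
      case base
      show ?case unfolding subspace_def by (simp add: mink_simps)
    next
      case (step y)
      then show ?case
        using angle_param_generator_skew[OF rot gen, of p] Axz mink_sym[of "A p" p]
          gen[unfolded flow_generator_def]
        by (auto simp: linear_0)
    qed
  qed
  have "A p \<noteq> 0" if p: "p \<in> P - \<sigma>" for p
  proof
    assume "A p = 0"
    then have "R \<theta> y = y" if "y \<in> {p, z, x}" for \<theta> y
      using flow_fixes_generator_kernel[OF angle_paramD(2,1)[OF rot] gen] angle_paramD(4)[OF rot] xz that
      by auto
    then have "R \<theta> w = id w" if "w \<in> span {p, z, x}" for \<theta> w
      by (intro linear_eq_on_span[OF angle_paramD(2)[OF rot] linear_id _ that]) auto
    then have "R \<theta> w = w" if "w \<in> W" for \<theta> w using W_span[OF p] that by simp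
    then show False using angle_param_no_fixed_hyperplane[OF rot W(1,2) xzW(1) xH] by blast
  qed
  then show ?thesis using that W(1,3) orth by blast
qed

section \<open>A maximum principle on the half-cylinder\<close>

lemma local_max_second_derivative:
  fixes f f' :: "real \<Rightarrow> real"
  assumes d: "d > 0"
    and d1: "\<And>s. s \<in> {t-d<..<t+d} \<Longrightarrow> (f has_real_derivative f' s) (at s)"
    and d2: "(f' has_real_derivative f2) (at t)"
    and max: "\<And>s. s \<in> {t-d<..<t+d} \<Longrightarrow> f s \<le> f t"
  shows "f' t = 0" "f2 \<le> 0"
proof -
  show ft: "f' t = 0"
    by (rule DERIV_local_max[OF d1[of t] d]) (use d max in \<open>auto simp: abs_less_iff\<close>)
  show "f2 \<le> 0"
  proof (rule ccontr)
    assume "\<not> f2 \<le> 0"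
    then obtain e where e: "e > 0" "\<And>h. h > 0 \<Longrightarrow> h < e \<Longrightarrow> f' t < f' (t + h)"
      using DERIV_pos_inc_right[OF d2] by force
    define h where "h = min e d / 2"
    have h: "h > 0" "h < e" "h < d" unfolding h_def using e d by auto
    obtain \<xi> where \<xi>: "t < \<xi>" "\<xi> < t + h" "f (t + h) - f t = (t + h - t) * f' \<xi>"
      using MVT2[of t "t+h" f f'] h d1 by force
    have "f' \<xi> > 0" using e(2)[of "\<xi> - t"] \<xi> h ft by auto
    then have "f (t + h) > f t" using \<xi>(3) h by (simp add: algebra_simps)
    moreover have "f (t + h) \<le> f t" using max[of "t+h"] h by auto
    ultimately show False by simp
  qed
qed

lemma periodic_value_in_period:
  fixes f :: "real \<Rightarrow> 'a"
  assumes per: "\<And>\<theta>. f (\<theta> + 2 * pi) = f \<theta>"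
  shows "\<exists>\<theta>'\<in>{0..2*pi}. f \<theta>' = f \<theta>"
proof -
  have pn: "f (x + 2 * pi * real n) = f x" for x n
    by (induct n) (auto simp: algebra_simps per[of "x + 2 * pi * real _", simplified algebra_simps])
  define k where "k = \<lfloor>\<theta> / (2*pi)\<rfloor>"
  define \<theta>' where "\<theta>' = \<theta> - 2 * pi * of_int k"
  have "of_int k \<le> \<theta> / (2*pi)" "\<theta> / (2*pi) < of_int k + 1" unfolding k_def by linarith+
  then have "0 \<le> \<theta>'" "\<theta>' \<le> 2 * pi" unfolding \<theta>'_def using pi_gt_zero
    by (auto simp: field_simps)
  moreover have "f \<theta>' = f \<theta>"
  proof (cases "k \<ge> 0")
    case True
    then have "\<theta> = \<theta>' + 2 * pi * real (nat k)" unfolding \<theta>'_def by simp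
    then show ?thesis using pn by metis
  next
    case False
    then have "\<theta>' = \<theta> + 2 * pi * real (nat (-k))" unfolding \<theta>'_def by simp
    then show ?thesis using pn by metis
  qed
  ultimately show ?thesis by auto
qed

lemma periodic_attains_max_on_strip:
  fixes z :: "real \<times> real \<Rightarrow> real"
  assumes T: "T \<ge> 0" and cont: "continuous_on ({0..T} \<times> {0..2*pi}) z"
    and per: "\<And>t \<theta>. z (t, \<theta> + 2*pi) = z (t, \<theta>)"
  obtains t1 \<theta>1 where "t1 \<in> {0..T}" "\<And>s \<theta>. s \<in> {0..T} \<Longrightarrow> z (s, \<theta>) \<le> z (t1, \<theta>1)"
proof -
  have "compact ({0..T} \<times> {0..2*pi})" by (intro compact_Times) auto
  moreover have "{0..T} \<times> {0..2*pi} \<noteq> {}" using T by auto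
  ultimately obtain y1 where y1: "y1 \<in> {0..T} \<times> {0..2*pi}"
    and max: "\<And>y. y \<in> {0..T} \<times> {0..2*pi} \<Longrightarrow> z y \<le> z y1"
    using continuous_attains_sup[OF _ _ cont] by blast
  have "z (s, \<theta>) \<le> z y1" if "s \<in> {0..T}" for s \<theta>
  proof -
    obtain \<theta>' where "\<theta>' \<in> {0..2*pi}" "z (s, \<theta>') = z (s, \<theta>)"
      using periodic_value_in_period[of "\<lambda>\<theta>. z (s, \<theta>)"] per by blast
    then show ?thesis using max[of "(s, \<theta>')"] that by auto
  qed
  then show ?thesis using that[of "fst y1" "snd y1"] y1 by auto
qed

definition cylinder_equation ::
  "(real \<Rightarrow> real) \<Rightarrow> (real \<Rightarrow> real) \<Rightarrow> (real \<Rightarrow> real) \<Rightarrow> (real \<times> real \<Rightarrow> real) \<Rightarrow>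
   (real \<times> real \<Rightarrow> real) \<Rightarrow> (real \<times> real \<Rightarrow> real) \<Rightarrow> (real \<times> real \<Rightarrow> real) \<Rightarrow>
   (real \<times> real \<Rightarrow> real) \<Rightarrow> (real \<times> real \<Rightarrow> real) \<Rightarrow> bool" where
  "cylinder_equation a da b f w wt wtt wh whh \<longleftrightarrow> (\<forall>t>0. \<forall>\<theta>.
     ((\<lambda>s. w (s, \<theta>)) has_real_derivative wt (t, \<theta>)) (at t) \<and>
     ((\<lambda>s. wt (s, \<theta>)) has_real_derivative wtt (t, \<theta>)) (at t) \<and>
     ((\<lambda>s. w (t, s)) has_real_derivative wh (t, \<theta>)) (at \<theta>) \<and>
     ((\<lambda>s. wh (t, s)) has_real_derivative whh (t, \<theta>)) (at \<theta>) \<and>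
     da t * wt (t, \<theta>) + a t * wtt (t, \<theta>) + b t * whh (t, \<theta>) = f (t, \<theta>))"

text \<open>The condition \<open>\<integral>\<^sub>0\<^sup>\<infinity> b = \<infinity>\<close> is what makes the end parabolic.\<close>
definition parabolic_coefficients ::
  "(real \<Rightarrow> real) \<Rightarrow> (real \<Rightarrow> real) \<Rightarrow> (real \<Rightarrow> real) \<Rightarrow> (real \<Rightarrow> real) \<Rightarrow> bool" where
  "parabolic_coefficients a da b db \<longleftrightarrow>
     continuous_on {0..} b \<and> (\<forall>t\<ge>0. b t > 0) \<and>
     (\<forall>t>0. a t * b t = 1 \<and> (a has_real_derivative da t) (at t) \<and> (b has_real_derivative db t) (at t)) \<and>
     (\<forall>M. \<exists>T\<ge>0. integral {0..T} b > M)"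

lemma cylinder_equation_diff:
  assumes "cylinder_equation a da b f u ut utt uh uhh" "cylinder_equation a da b g v vt vtt vh vhh"
  shows "cylinder_equation a da b (\<lambda>x. f x - g x) (\<lambda>x. u x - v x) (\<lambda>x. ut x - vt x)
    (\<lambda>x. utt x - vtt x) (\<lambda>x. uh x - vh x) (\<lambda>x. uhh x - vhh x)"
  using assms unfolding cylinder_equation_def
  by (auto intro!: derivative_eq_intros simp: algebra_simps)

lemma nonneg_primitive:
  fixes b :: "real \<Rightarrow> real"
  assumes cont: "continuous_on {0..} b" and nonneg: "\<And>t. t \<ge> 0 \<Longrightarrow> b t \<ge> 0"
  defines "\<phi> \<equiv> \<lambda>t. integral {0..t} b"
  shows "\<phi> 0 = 0" "\<And>s t. 0 \<le> s \<Longrightarrow> s \<le> t \<Longrightarrow> \<phi> s \<le> \<phi> t" "\<And>T. continuous_on {0..T} \<phi>"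
    "\<And>t. t > 0 \<Longrightarrow> (\<phi> has_real_derivative b t) (at t)"
proof -
  have bint: "b integrable_on {s..t}" if "0 \<le> s" for s t
    using cont that by (intro integrable_continuous_real) (auto intro: continuous_on_subset)
  show "\<phi> 0 = 0" unfolding \<phi>_def by simp
  show "\<phi> s \<le> \<phi> t" if "0 \<le> s" "s \<le> t" for s t
  proof -
    have "integral {0..s} b + integral {s..t} b = integral {0..t} b"
      using that bint[of 0 t] by (intro Henstock_Kurzweil_Integration.integral_combine) auto
    moreover have "0 \<le> integral {s..t} b" using that nonneg bint[of s t] by (intro integral_nonneg) auto
    ultimately show ?thesis unfolding \<phi>_def by linarith
  qed
  show "continuous_on {0..T} \<phi>" for T
    unfolding \<phi>_def using bint[of 0 T, OF order_refl] by (rule indefinite_integral_continuous_1)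
  show "(\<phi> has_real_derivative b t) (at t)" if "t > 0" for t
  proof -
    have "(\<phi> has_real_derivative b t) (at t within {0..t+1})"
      unfolding \<phi>_def using cont that
      by (intro integral_has_real_derivative) (auto intro: continuous_on_subset)
    moreover have "at t within {0..t+1} = at t" using that by (intro at_within_interior) simp
    ultimately show ?thesis by simp
  qed
qed

lemma parabolic_coefficients_derivative_product:
  assumes coef: "parabolic_coefficients a da b db" and t: "t > 0"
  shows "da t * b t + a t * db t = 0"
proof -
  have "((\<lambda>s. a s * b s) has_real_derivative da t * b t + a t * db t) (at t)"
    using coef t unfolding parabolic_coefficients_def by (auto intro!: derivative_eq_intros)
  moreover have "((\<lambda>s. a s * b s) has_real_derivative 0) (at t)"
  proof (rule has_field_derivative_transform_within_open[of "\<lambda>s. 1" _ _ "{0<..}"])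
    show "((\<lambda>s. 1) has_real_derivative 0) (at t)" by simp
  qed (use t coef in \<open>auto simp: parabolic_coefficients_def\<close>)
  ultimately show ?thesis by (rule DERIV_unique)
qed

text \<open>The barrier \<open>-\<epsilon> \<phi> + \<delta> \<phi>\<^sup>2\<close>, with \<open>\<phi>' = b\<close> and \<open>a b = 1\<close>, turns a solution into a strict
  subsolution: \<open>(a \<phi>')' = 0\<close> and \<open>(a (\<phi>\<^sup>2)')' = 2 a \<phi>'\<^sup>2 = 2 b\<close>.\<close>
lemma cylinder_equation_barrier:
  assumes coef: "parabolic_coefficients a da b db"
    and sol: "cylinder_equation a da b (\<lambda>_. 0) w wt wtt wh whh"
  defines "\<phi> \<equiv> \<lambda>t. integral {0..t} b"
  shows "cylinder_equation a da b (\<lambda>x. 2 * \<delta> * b (fst x))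
     (\<lambda>x. w x - \<epsilon> * \<phi> (fst x) + \<delta> * (\<phi> (fst x))^2)
     (\<lambda>x. wt x - \<epsilon> * b (fst x) + \<delta> * (2 * \<phi> (fst x) * b (fst x)))
     (\<lambda>x. wtt x - \<epsilon> * db (fst x) + \<delta> * (2 * (b (fst x) * b (fst x) + \<phi> (fst x) * db (fst x))))
     wh whh"
  unfolding cylinder_equation_def
proof (intro allI impI, goal_cases)
  case (1 t \<theta>)
  then have \<phi>: "(\<phi> has_real_derivative b t) (at t)"
    using coef unfolding \<phi>_def parabolic_coefficients_def
    by (intro nonneg_primitive(4)) (auto intro: less_imp_le)
  have coef_t: "a t * b t = 1" "(b has_real_derivative db t) (at t)"
    using coef 1 unfolding parabolic_coefficients_def by auto
  note w = sol[unfolded cylinder_equation_def, rule_format, OF 1, of \<theta>]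
  have "da t * (wt (t, \<theta>) - \<epsilon> * b t + \<delta> * (2 * \<phi> t * b t))
      + a t * (wtt (t, \<theta>) - \<epsilon> * db t + \<delta> * (2 * (b t * b t + \<phi> t * db t))) + b t * whh (t, \<theta>)
      = (da t * wt (t, \<theta>) + a t * wtt (t, \<theta>) + b t * whh (t, \<theta>))
        + (2 * \<delta> * \<phi> t - \<epsilon>) * (da t * b t + a t * db t) + 2 * \<delta> * (a t * b t) * b t"
    by (simp add: algebra_simps)
  also have "\<dots> = 2 * \<delta> * b t"
    using w parabolic_coefficients_derivative_product[OF coef 1] coef_t(1) by simp
  finally show ?case using w \<phi> coef_t(2) by (auto intro!: derivative_eq_intros simp: algebra_simps)
qed

lemma cylinder_equation_no_interior_max:
  assumes sol: "cylinder_equation a da b f z zt ztt zh zhh"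
    and pos: "a t1 > 0" "b t1 > 0" "f (t1, \<theta>1) > 0"
    and d: "0 < d" "d \<le> t1"
    and max: "\<And>s \<theta>. s \<in> {t1-d<..<t1+d} \<Longrightarrow> z (s, \<theta>) \<le> z (t1, \<theta>1)"
  shows False
proof -
  note eq = sol[unfolded cylinder_equation_def, rule_format]
  have t1: "t1 > 0" using d by simp
  have "((\<lambda>s. z (s, \<theta>1)) has_real_derivative zt (s, \<theta>1)) (at s)" if "s \<in> {t1-d<..<t1+d}" for s
    using eq that d by auto
  moreover have "((\<lambda>s. zt (s, \<theta>1)) has_real_derivative ztt (t1, \<theta>1)) (at t1)" using eq t1 by blast
  ultimately have "zt (t1, \<theta>1) = 0" "ztt (t1, \<theta>1) \<le> 0"
    using local_max_second_derivative[where f="\<lambda>s. z (s, \<theta>1)" and f'="\<lambda>s. zt (s, \<theta>1)", OF d(1)]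
      max by blast+
  moreover have "zhh (t1, \<theta>1) \<le> 0"
    by (rule local_max_second_derivative(2)[OF zero_less_one, where f="\<lambda>s. z (t1, s)"
          and f'="\<lambda>s. zh (t1, s)"]) (use eq[OF t1] max d in auto)
  ultimately have "da t1 * zt (t1, \<theta>1) + a t1 * ztt (t1, \<theta>1) + b t1 * zhh (t1, \<theta>1) \<le> 0"
    using pos by (simp add: mult_nonneg_nonpos add_nonpos_nonpos)
  then show False using eq[OF t1, of \<theta>1] pos(3) by simp
qed

text \<open>Proof by a barrier: if \<open>w\<close> were positive somewhere, then \<open>w - \<epsilon> \<phi> + \<delta> \<phi>\<^sup>2\<close>, with
  \<open>\<phi> = \<integral>\<^sub>0\<^sup>t b\<close> unbounded, would attain a positive interior maximum on a strip \<open>[0, T]\<close>.\<close>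
lemma cylinder_max_principle:
  assumes coef: "parabolic_coefficients a da b db"
    and sol: "cylinder_equation a da b (\<lambda>_. 0) w wt wtt wh whh"
    and per: "\<And>t \<theta>. w (t, \<theta> + 2*pi) = w (t, \<theta>)"
    and cont: "continuous_on {x. fst x \<ge> 0} w"
    and bdd: "\<And>x. fst x \<ge> 0 \<Longrightarrow> w x \<le> B"
    and boundary: "\<And>\<theta>. w (0, \<theta>) \<le> 0"
    and x: "fst x \<ge> 0"
  shows "w x \<le> 0"
proof (rule ccontr)
  assume "\<not> w x \<le> 0"
  then obtain t0 \<theta>0 where x0: "x = (t0, \<theta>0)" and w0: "w (t0, \<theta>0) > 0" by (cases x) auto
  have t0: "t0 \<ge> 0" using x x0 by simp
  have bcont: "continuous_on {0..} b" and bpos: "\<And>t. t \<ge> 0 \<Longrightarrow> b t > 0"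
    and ab: "\<And>t. t > 0 \<Longrightarrow> a t * b t = 1" and unb: "\<And>M. \<exists>T\<ge>0. integral {0..T} b > M"
    using coef unfolding parabolic_coefficients_def by auto
  define \<phi> where "\<phi> t = integral {0..t} b" for t
  note \<phi> = nonneg_primitive(1-3)[OF bcont less_imp_le[OF bpos], folded \<phi>_def]
  have \<phi>nn: "\<phi> t \<ge> 0" if "t \<ge> 0" for t using \<phi>(1) \<phi>(2)[of 0 t] that by simp
  define \<epsilon> where "\<epsilon> = w (t0, \<theta>0) / (2 * (\<phi> t0 + 1))"
  have \<epsilon>: "\<epsilon> > 0" unfolding \<epsilon>_def using w0 \<phi>nn[OF t0] by simp
  have \<epsilon>t0: "\<epsilon> * \<phi> t0 < w (t0, \<theta>0)"
  proof -
    have "\<epsilon> * \<phi> t0 = w (t0, \<theta>0) * (\<phi> t0 / (2 * (\<phi> t0 + 1)))" unfolding \<epsilon>_def by simp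
    also have "\<dots> < w (t0, \<theta>0) * 1" using w0 \<phi>nn[OF t0] by (intro mult_strict_left_mono) auto
    finally show ?thesis by simp
  qed
  obtain T where T: "T \<ge> 0" "\<phi> T > max ((B + 1) / \<epsilon>) (\<phi> t0)"
    using unb[of "max ((B + 1) / \<epsilon>) (\<phi> t0)"] unfolding \<phi>_def by blast
  have Tt0: "t0 < T" using T \<phi>(2)[of T t0] by force
  have \<epsilon>T: "\<epsilon> * \<phi> T > B + 1" using T(2) \<epsilon> by (simp add: field_simps)
  define \<delta> where "\<delta> = 1 / ((\<phi> T)^2 + 1)"
  have \<delta>: "\<delta> > 0" "\<delta> * (\<phi> T)^2 < 1" unfolding \<delta>_def by (auto simp: field_simps add_pos_nonneg)
  define z where "z y = w y - \<epsilon> * \<phi> (fst y) + \<delta> * (\<phi> (fst y))^2" for y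
  have z_eq: "cylinder_equation a da b (\<lambda>x. 2 * \<delta> * b (fst x)) z
      (\<lambda>x. wt x - \<epsilon> * b (fst x) + \<delta> * (2 * \<phi> (fst x) * b (fst x)))
      (\<lambda>x. wtt x - \<epsilon> * db (fst x) + \<delta> * (2 * (b (fst x) * b (fst x) + \<phi> (fst x) * db (fst x))))
      wh whh"
    using cylinder_equation_barrier[OF coef sol, of \<delta> \<epsilon>] unfolding z_def[abs_def] \<phi>_def .
  have "continuous_on ({0..T} \<times> {0..2*pi}) z"
  proof -
    have "continuous_on ({0..T} \<times> {0..2*pi}) w" by (rule continuous_on_subset[OF cont]) auto
    moreover have "continuous_on ({0..T} \<times> {0..2*pi}) (\<lambda>y. \<phi> (fst y))"
      by (rule continuous_on_compose2[OF \<phi>(3)[of T] continuous_on_fst[OF continuous_on_id]]) auto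
    ultimately show ?thesis unfolding z_def by (intro continuous_intros)
  qed
  moreover have "z (t, \<theta> + 2*pi) = z (t, \<theta>)" for t \<theta> unfolding z_def using per by simp
  ultimately obtain t1 \<theta>1 where t1: "t1 \<in> {0..T}"
    and max: "\<And>s \<theta>. s \<in> {0..T} \<Longrightarrow> z (s, \<theta>) \<le> z (t1, \<theta>1)"
    using periodic_attains_max_on_strip[OF T(1)] by blast
  have "z (t0, \<theta>0) > 0" unfolding z_def using \<epsilon>t0 \<delta>(1) by (simp add: add_pos_nonneg)
  then have zpos: "z (t1, \<theta>1) > 0" using max[of t0 \<theta>0] t0 Tt0 by auto
  have "z (0, \<theta>1) \<le> 0" unfolding z_def using boundary \<phi>(1) by simp
  moreover have "z (T, \<theta>1) < 0" unfolding z_def using bdd[of "(T, \<theta>1)"] T(1) \<epsilon>T \<delta>(2) by simp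
  ultimately have "0 < t1" "t1 < T" using t1 zpos by (auto simp: order.order_iff_strict)
  moreover have "b t1 > 0" using bpos \<open>0 < t1\<close> by simp
  moreover have "a t1 > 0"
    using ab[of t1] \<open>0 < t1\<close> \<open>b t1 > 0\<close> mult_nonpos_nonneg[of "a t1" "b t1"] by fastforce
  moreover define d where "d = min t1 (T - t1)"
  moreover have "z (s, \<theta>) \<le> z (t1, \<theta>1)" if "s \<in> {t1-d<..<t1+d}" for s \<theta>
  proof -
    have "0 \<le> s \<and> s \<le> T" using that unfolding d_def by (auto simp: min_def split: if_splits)
    then show ?thesis using max by auto
  qed
  ultimately show False
    using cylinder_equation_no_interior_max[OF z_eq, of t1 \<theta>1 d] \<delta>(1) by simp
qed

lemma harmonic_on_E_cylinder_equation:
  fixes F :: "real \<times> real \<Rightarrow> real^4" and u :: "real \<times> real \<Rightarrow> real"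
  assumes harm: "harmonic_on_E F u"
    and flux_t: "\<And>s \<theta>. s > 0 \<Longrightarrow> lb_flux_t F u (s, \<theta>) = a s * dt u (s, \<theta>)"
    and flux_\<theta>: "\<And>s \<theta>. s > 0 \<Longrightarrow> lb_flux_\<theta> F u (s, \<theta>) = b s * d\<theta> u (s, \<theta>)"
    and da: "\<And>t. t > 0 \<Longrightarrow> (a has_real_derivative da t) (at t)"
  shows "cylinder_equation a da b (\<lambda>_. 0) u (dt u) (dt (dt u)) (d\<theta> u) (d\<theta> (d\<theta> u))"
  unfolding cylinder_equation_def
proof (intro allI impI, goal_cases)
  case (1 t \<theta>)
  then have t: "t > 0" .
  have xi: "(t, \<theta>) \<in> interior_E" using t by (simp add: interior_E_def)
  have "Ck_on (Suc (Suc 0)) interior_E u" using harm unfolding harmonic_on_E_def by (simp add: numeral_2_eq_2)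
  then have "(\<lambda>s. u (s, \<theta>)) differentiable (at t)" "(\<lambda>s. u (t, s)) differentiable (at \<theta>)"
    "(\<lambda>s. dt u (s, \<theta>)) differentiable (at t)" "(\<lambda>s. d\<theta> u (t, s)) differentiable (at \<theta>)"
    using xi by (auto simp del: Ck_on.simps(1))
  then have r: "((\<lambda>s. u (s, \<theta>)) has_real_derivative dt u (t, \<theta>)) (at t)"
    "((\<lambda>s. dt u (s, \<theta>)) has_real_derivative dt (dt u) (t, \<theta>)) (at t)"
    "((\<lambda>s. u (t, s)) has_real_derivative d\<theta> u (t, \<theta>)) (at \<theta>)"
    "((\<lambda>s. d\<theta> u (t, s)) has_real_derivative d\<theta> (d\<theta> u) (t, \<theta>)) (at \<theta>)"
    unfolding dt_def[of u] dt_def[of "dt u"] d\<theta>_def[of u] d\<theta>_def[of "d\<theta> u"]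
      has_real_derivative_iff_has_vector_derivative
    by (simp_all add: vector_derivative_works[symmetric])
  have "((\<lambda>s. a s * dt u (s, \<theta>)) has_real_derivative da t * dt u (t, \<theta>) + a t * dt (dt u) (t, \<theta>)) (at t)"
    using da[OF t] r(2) by (auto intro!: derivative_eq_intros)
  then have "((\<lambda>s. lb_flux_t F u (s, \<theta>)) has_real_derivative
      da t * dt u (t, \<theta>) + a t * dt (dt u) (t, \<theta>)) (at t)"
    by (rule has_field_derivative_transform_within_open[of _ _ _ "{0<..}"]) (use t flux_t in auto)
  then have "dt (lb_flux_t F u) (t, \<theta>) = da t * dt u (t, \<theta>) + a t * dt (dt u) (t, \<theta>)"
    unfolding dt_def has_real_derivative_iff_has_vector_derivative by (simp add: vector_derivative_at)
  moreover have "((\<lambda>s. b t * d\<theta> u (t, s)) has_real_derivative b t * d\<theta> (d\<theta> u) (t, \<theta>)) (at \<theta>)"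
    using r(4) by (rule DERIV_cmult)
  then have "((\<lambda>s. lb_flux_\<theta> F u (t, s)) has_real_derivative b t * d\<theta> (d\<theta> u) (t, \<theta>)) (at \<theta>)"
    using flux_\<theta>[OF t] by simp
  then have "d\<theta> (lb_flux_\<theta> F u) (t, \<theta>) = b t * d\<theta> (d\<theta> u) (t, \<theta>)"
    unfolding d\<theta>_def has_real_derivative_iff_has_vector_derivative by (simp add: vector_derivative_at)
  moreover have "dt (lb_flux_t F u) (t, \<theta>) + d\<theta> (lb_flux_\<theta> F u) (t, \<theta>) = 0"
    using harm xi unfolding harmonic_on_E_def by blast
  ultimately show ?case using r by simp
qed

lemma parabolic_end_of_fluxes:
  fixes F :: "real \<times> real \<Rightarrow> real^4"
  assumes coef: "parabolic_coefficients a da b db"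
    and flux_t: "\<And>u s \<theta>. s > 0 \<Longrightarrow> lb_flux_t F u (s, \<theta>) = a s * dt u (s, \<theta>)"
    and flux_\<theta>: "\<And>u s \<theta>. s > 0 \<Longrightarrow> lb_flux_\<theta> F u (s, \<theta>) = b s * d\<theta> u (s, \<theta>)"
  shows "parabolic_end F"
proof -
  have da: "\<And>t. t > 0 \<Longrightarrow> (a has_real_derivative da t) (at t)"
    using coef unfolding parabolic_coefficients_def by blast
  have le: "u x \<le> v x" if u: "bdd_harmonic_E F u" and v: "bdd_harmonic_E F v"
    and boundary: "\<forall>\<theta>. u (0, \<theta>) = v (0, \<theta>)" and x: "fst x \<ge> 0" for u v x
  proof -
    have "harmonic_on_E F u" "harmonic_on_E F v" using u v unfolding bdd_harmonic_E_def by blast+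
    note sol = this[THEN harmonic_on_E_cylinder_equation[OF _ flux_t flux_\<theta> da]]
    obtain Bu Bv where "\<And>y. fst y \<ge> 0 \<Longrightarrow> \<bar>u y\<bar> \<le> Bu" "\<And>y. fst y \<ge> 0 \<Longrightarrow> \<bar>v y\<bar> \<le> Bv"
      using u v unfolding bdd_harmonic_E_def by metis
    then have bound: "\<And>y. fst y \<ge> 0 \<Longrightarrow> u y - v y \<le> Bu + Bv" by (smt (verit))
    have diff: "cylinder_equation a da b (\<lambda>_. 0) (\<lambda>y. u y - v y) (\<lambda>y. dt u y - dt v y)
        (\<lambda>y. dt (dt u) y - dt (dt v) y) (\<lambda>y. d\<theta> u y - d\<theta> v y) (\<lambda>y. d\<theta> (d\<theta> u) y - d\<theta> (d\<theta> v) y)"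
      using cylinder_equation_diff[OF sol] by simp
    have "u x - v x \<le> 0"
    proof (rule cylinder_max_principle[OF coef diff _ _ bound _ x])
      show "u (t, \<theta> + 2*pi) - v (t, \<theta> + 2*pi) = u (t, \<theta>) - v (t, \<theta>)" for t \<theta>
        using u v unfolding bdd_harmonic_E_def by simp
      show "continuous_on {x. 0 \<le> fst x} (\<lambda>y. u y - v y)"
        using u v unfolding bdd_harmonic_E_def by (intro continuous_on_diff) blast+
      show "u (0, \<theta>) - v (0, \<theta>) \<le> 0" for \<theta> using boundary by simp
    qed
    then show ?thesis by simp
  qed
  show ?thesis unfolding parabolic_end_def using le by (metis order_antisym)
qed

section \<open>Ends of revolution\<close>

lemma integral_unbounded_of_nn_integral_infinite:
  fixes f :: "real \<Rightarrow> real"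
  assumes cont: "continuous_on {0..} f" and nn: "\<And>x. x \<ge> 0 \<Longrightarrow> 0 \<le> f x"
    and inf: "set_nn_integral lborel {0..} (\<lambda>t. ennreal (f t)) = \<infinity>"
  shows "\<exists>T\<ge>0. integral {0..T} f > M"
proof (rule ccontr)
  assume "\<not> (\<exists>T\<ge>0. integral {0..T} f > M)"
  then have bd: "\<And>T. T \<ge> 0 \<Longrightarrow> integral {0..T} f \<le> M" by (simp add: not_less)
  define F where "F n x = ennreal (f x) * indicator {0..real n} x" for n :: nat and x :: real
  have inc: "incseq F"
    unfolding F_def by (intro incseq_SucI le_funI) (auto simp: indicator_def)
  have meas: "F n \<in> borel_measurable lborel" for n
  proof -
    have "(\<lambda>x. indicator {0..real n} x *\<^sub>R f x) \<in> borel_measurable borel"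
      using cont by (intro borel_measurable_continuous_on_indicator) (auto intro: continuous_on_subset)
    then have "(\<lambda>x. ennreal (indicator {0..real n} x *\<^sub>R f x)) \<in> borel_measurable borel" by measurable
    moreover have "(\<lambda>x. ennreal (indicator {0..real n} x *\<^sub>R f x)) = F n"
      unfolding F_def by (auto simp: indicator_def)
    ultimately show ?thesis by simp
  qed
  have sup: "(SUP n. F n x) = ennreal (f x) * indicator {0..} x" for x
  proof (cases "x \<ge> 0")
    case True
    have "(SUP n. F n x) = ennreal (f x)"
    proof (rule antisym)
      show "(SUP n. F n x) \<le> ennreal (f x)" unfolding F_def by (intro SUP_least) (auto simp: indicator_def)
      have "F (nat \<lceil>x\<rceil>) x = ennreal (f x)" unfolding F_def using True by (auto simp: indicator_def)
      then show "ennreal (f x) \<le> (SUP n. F n x)" by (metis SUP_upper UNIV_I)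
    qed
    then show ?thesis using True by simp
  next
    case False
    then show ?thesis unfolding F_def by (simp add: indicator_def)
  qed
  have int: "integral\<^sup>N lborel (F n) = ennreal (integral {0..real n} f)" for n
  proof -
    have "(f has_integral integral {0..real n} f) {0..real n}"
      using cont by (intro integrable_integral integrable_continuous_real) (auto intro: continuous_on_subset)
    then show ?thesis unfolding F_def using nn by (intro nn_integral_has_integral_lebesgue') auto
  qed
  have "set_nn_integral lborel {0..} (\<lambda>t. ennreal (f t)) = (\<integral>\<^sup>+ x. (SUP n. F n x) \<partial>lborel)"
    by (simp add: sup)
  also have "\<dots> = (SUP n. integral\<^sup>N lborel (F n))"
    by (rule nn_integral_monotone_convergence_SUP[OF inc meas])
  also have "\<dots> \<le> ennreal M"
    by (intro SUP_least) (auto simp: int bd intro: ennreal_leI)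
  finally show False using inf by (simp add: top_unique)
qed

lemma integral_quotient_unbounded:
  fixes f g :: "real \<Rightarrow> real"
  assumes f: "continuous_on {0..} f" "\<And>t. t \<ge> 0 \<Longrightarrow> 0 \<le> f t"
    and inf: "set_nn_integral lborel {0..} (\<lambda>t. ennreal (f t)) = \<infinity>"
    and g: "continuous_on {0..} g" "\<And>t. t \<ge> 0 \<Longrightarrow> 0 < g t" "\<And>t. t \<ge> 0 \<Longrightarrow> g t \<le> Q"
  shows "\<exists>T\<ge>0. integral {0..T} (\<lambda>t. f t / g t) > M"
proof -
  have Q: "Q > 0" using g(2,3)[of 0] by simp
  obtain T where T: "T \<ge> 0" "integral {0..T} f > M * Q"
    using integral_unbounded_of_nn_integral_infinite[OF f inf] by blast
  have "integral {0..T} (\<lambda>t. f t / Q) \<le> integral {0..T} (\<lambda>t. f t / g t)"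
  proof (rule integral_le)
    have cf: "continuous_on {0..T} f" and cg: "continuous_on {0..T} g"
      using f(1) g(1) by (auto intro: continuous_on_subset)
    have "\<forall>t\<in>{0..T}. g t \<noteq> 0" using g(2) by force
    then show "(\<lambda>t. f t / g t) integrable_on {0..T}"
      by (intro integrable_continuous_real continuous_on_divide cf cg)
    show "(\<lambda>t. f t / Q) integrable_on {0..T}"
      using Q by (intro integrable_continuous_real continuous_on_divide cf continuous_on_const) auto
    show "f t / Q \<le> f t / g t" if "t \<in> {0..T}" for t
      using that f(2)[of t] g(2,3)[of t] Q by (intro divide_left_mono mult_pos_pos) auto
  qed
  moreover have "integral {0..T} (\<lambda>t. f t / Q) = integral {0..T} f / Q"
    by (simp add: divide_inverse integral_mult_left)
  moreover have "integral {0..T} f / Q > M" using T(2) Q by (simp add: field_simps)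
  ultimately show ?thesis using T(1) by force
qed

lemma smooth_halfline_derivatives:
  fixes \<beta> :: "real \<Rightarrow> 'a::real_normed_vector"
  assumes "smooth_halfline \<beta>"
  defines "\<beta>' \<equiv> \<lambda>t. vector_derivative \<beta> (at t within {0..})"
  shows "continuous_on {0..} \<beta>" "continuous_on {0..} \<beta>'"
    "\<And>t. t > 0 \<Longrightarrow> (\<beta> has_vector_derivative \<beta>' t) (at t)"
    "\<And>t. t > 0 \<Longrightarrow> (\<beta>' has_vector_derivative vector_derivative \<beta>' (at t within {0..})) (at t)"
proof -
  have C2: "Ck_halfline (Suc (Suc 0)) \<beta>" and C1: "Ck_halfline (Suc 0) \<beta>" and C0: "Ck_halfline 0 \<beta>"
    using assms unfolding smooth_halfline_def by blast+
  show "continuous_on {0..} \<beta>" "continuous_on {0..} \<beta>'" using C0 C1 unfolding \<beta>'_def by simp_all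
  have within_pos: "(f has_vector_derivative vector_derivative f (at t within {0..})) (at t)"
    if "f differentiable (at t within {0..})" "t > 0" for f :: "real \<Rightarrow> 'a" and t
  proof -
    have "at t within {0..} = at t" using that(2) by (intro at_within_interior) simp
    then show ?thesis using that(1) vector_derivative_works[of f "at t within {0..}"] by simp
  qed
  show "(\<beta> has_vector_derivative \<beta>' t) (at t)"
    "(\<beta>' has_vector_derivative vector_derivative \<beta>' (at t within {0..})) (at t)" if "t > 0" for t
    using C2 within_pos that unfolding \<beta>'_def by auto
qed

lemma has_vector_derivative_const_on_pos:
  fixes h :: "real \<Rightarrow> 'a::real_normed_vector"
  assumes "(h has_vector_derivative D) (at t)" "t > 0" "\<And>s. s > 0 \<Longrightarrow> h s = c"
  shows "D = 0"
proof -
  have "((\<lambda>s. c) has_vector_derivative D) (at t)"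
    by (rule has_vector_derivative_transform_within_open[OF assms(1), of "{0<..}"]) (use assms in auto)
  then show ?thesis by (rule has_vector_derivative_const_imp_zero)
qed

text \<open>Differentiating \<open>\<langle>\<beta>, \<beta>\<rangle> = -1\<close> shows that the velocity is Minkowski-orthogonal to the
  timelike position vector, hence spacelike.\<close>
lemma H3_curve_velocity_spacelike:
  assumes H: "\<And>t. t \<ge> 0 \<Longrightarrow> \<beta> t \<in> H3"
    and cont: "continuous_on {0..} \<beta>" "continuous_on {0..} \<beta>'"
    and deriv: "\<And>t. t > 0 \<Longrightarrow> (\<beta> has_vector_derivative \<beta>' t) (at t)"
    and t: "t \<ge> 0" and nz: "\<beta>' t \<noteq> 0"
  shows "mink (\<beta>' t) (\<beta>' t) > 0"
proof -
  have orth_pos: "mink (\<beta> s) (\<beta>' s) = 0" if "s > 0" for s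
  proof -
    have "((\<lambda>s. mink (\<beta> s) (\<beta> s)) has_vector_derivative (mink (\<beta> s) (\<beta>' s) + mink (\<beta>' s) (\<beta> s))) (at s)"
      by (intro has_vector_derivative_mink deriv that)
    moreover have "mink (\<beta> r) (\<beta> r) = -1" if "r > 0" for r using H[of r] that by (simp add: H3_def)
    ultimately have "mink (\<beta> s) (\<beta>' s) + mink (\<beta>' s) (\<beta> s) = 0"
      by (rule has_vector_derivative_const_on_pos[OF _ that])
    then show ?thesis by (simp add: mink_sym)
  qed
  have "mink (\<beta> t) (\<beta>' t) = 0"
  proof (cases "t = 0")
    case False then show ?thesis using orth_pos t by simp
  next
    case True
    have "(\<lambda>n. 1 / (real n + 1)) \<longlonglongrightarrow> 0"
      using LIMSEQ_inverse_real_of_nat by (simp add: inverse_eq_divide add.commute)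
    then have "(\<lambda>n. mink (\<beta> (1 / (real n + 1))) (\<beta>' (1 / (real n + 1)))) \<longlonglongrightarrow> mink (\<beta> 0) (\<beta>' 0)"
      by (rule continuous_on_tendsto_compose[OF continuous_on_mink[OF cont]]) auto
    moreover have "(\<lambda>n. mink (\<beta> (1 / (real n + 1))) (\<beta>' (1 / (real n + 1)))) = (\<lambda>n. 0)"
      using orth_pos by simp
    ultimately show ?thesis using True LIMSEQ_unique tendsto_const by metis
  qed
  then show ?thesis using mink_orth_timelike_imp_spacelike[OF H3_mink_neg[OF H[OF t]]] nz by blast
qed

text \<open>This makes the coordinates \<open>(t, \<theta>)\<close> of the end orthogonal and nondegenerate.\<close>
lemma profile_curve_rotation_field:
  assumes geod: "hgeodesic \<sigma>" and plane: "hplane P" and sub: "\<sigma> \<subseteq> P"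
    and rot: "angle_param \<sigma> R" and gen: "flow_generator R A"
    and curve: "\<And>t. t \<ge> 0 \<Longrightarrow> \<beta> t \<in> P - \<sigma>"
    and deriv: "\<And>t. t > 0 \<Longrightarrow> (\<beta> has_vector_derivative \<beta>' t) (at t)"
  shows "\<And>t. t \<ge> 0 \<Longrightarrow> mink (A (\<beta> t)) (A (\<beta> t)) > 0"
    "\<And>t. t > 0 \<Longrightarrow> mink (\<beta>' t) (A (\<beta> t)) = 0"
proof -
  obtain W where W: "P = H3 \<inter> W" and A_nz: "\<And>p. p \<in> P - \<sigma> \<Longrightarrow> A p \<noteq> 0"
    and A_orth: "\<And>p w. p \<in> P - \<sigma> \<Longrightarrow> w \<in> W \<Longrightarrow> mink (A p) w = 0"
    using rotation_generator_normal_to_plane[OF geod plane sub rot gen] by metis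
  show "mink (A (\<beta> t)) (A (\<beta> t)) > 0" if "t \<ge> 0" for t
  proof (rule mink_orth_timelike_imp_spacelike)
    show "mink (\<beta> t) (\<beta> t) < 0" using curve[OF that] W by (simp add: H3_mink_neg)
    show "mink (\<beta> t) (A (\<beta> t)) = 0"
      using angle_param_generator_skew[OF rot gen, of "\<beta> t" "\<beta> t"] by (simp add: mink_sym)
    show "A (\<beta> t) \<noteq> 0" using A_nz curve that by blast
  qed
  show "mink (\<beta>' t) (A (\<beta> t)) = 0" if "t > 0" for t
  proof -
    have "((\<lambda>s. mink (A (\<beta> t)) (\<beta> s)) has_vector_derivative (mink (A (\<beta> t)) (\<beta>' t) + mink 0 (\<beta> t))) (at t)"
      by (intro has_vector_derivative_mink deriv that has_vector_derivative_const)
    moreover have "mink (A (\<beta> t)) (\<beta> s) = 0" if "s > 0" for s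
      using curve[of t] curve[of s] W \<open>t > 0\<close> that by (intro A_orth) auto
    ultimately have "mink (A (\<beta> t)) (\<beta>' t) + mink 0 (\<beta> t) = 0"
      by (rule has_vector_derivative_const_on_pos[OF _ that])
    then show ?thesis by (simp add: mink_sym)
  qed
qed

lemma rev_imm_metric:
  assumes rot: "angle_param \<sigma> R" and gen: "flow_generator R A"
    and deriv: "(\<beta> has_vector_derivative v) (at s)"
  shows "g11 (rev_imm R \<beta>) (s, \<theta>) = mink v v" "g22 (rev_imm R \<beta>) (s, \<theta>) = mink (A (\<beta> s)) (A (\<beta> s))"
    "g12 (rev_imm R \<beta>) (s, \<theta>) = mink v (A (\<beta> s))"
proof -
  have "bounded_linear (R \<theta>)" using angle_paramD(2)[OF rot] by (simp add: linear_conv_bounded_linear)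
  then have "((\<lambda>s. R \<theta> (\<beta> s)) has_vector_derivative R \<theta> v) (at s)"
    by (rule bounded_linear.has_vector_derivative[OF _ deriv])
  then have "dt (rev_imm R \<beta>) (s, \<theta>) = R \<theta> v"
    unfolding dt_def rev_imm_def by (simp add: vector_derivative_at)
  moreover have "((\<lambda>\<theta>. R \<theta> (\<beta> s)) has_vector_derivative R \<theta> (A (\<beta> s))) (at \<theta>)"
    using gen unfolding flow_generator_def by blast
  then have "d\<theta> (rev_imm R \<beta>) (s, \<theta>) = R \<theta> (A (\<beta> s))"
    unfolding d\<theta>_def rev_imm_def by (simp add: vector_derivative_at)
  ultimately show "g11 (rev_imm R \<beta>) (s, \<theta>) = mink v v"
    "g22 (rev_imm R \<beta>) (s, \<theta>) = mink (A (\<beta> s)) (A (\<beta> s))"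
    "g12 (rev_imm R \<beta>) (s, \<theta>) = mink v (A (\<beta> s))"
    unfolding g11_def g22_def g12_def by (simp_all add: angle_paramD(3)[OF rot])
qed

lemma lb_flux_diagonal:
  assumes "g11 F x = p" "g22 F x = q" "g12 F x = 0" "p > 0" "q > 0"
  shows "lb_flux_t F u x = sqrt q / sqrt p * dt u x" "lb_flux_\<theta> F u x = sqrt p / sqrt q * d\<theta> u x"
proof -
  have "p = sqrt p * sqrt p" "q = sqrt q * sqrt q" using assms(4,5) by simp_all
  then have q: "q / sqrt (p * q) = sqrt q / sqrt p" and p: "p / sqrt (p * q) = sqrt p / sqrt q"
    using assms(4,5) by (simp_all add: real_sqrt_mult field_simps)
  have "lb_flux_t F u x = q / sqrt (p * q) * dt u x" "lb_flux_\<theta> F u x = p / sqrt (p * q) * d\<theta> u x"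
    using assms unfolding lb_flux_t_def lb_flux_\<theta>_def gdet_def by simp_all
  then show "lb_flux_t F u x = sqrt q / sqrt p * dt u x" "lb_flux_\<theta> F u x = sqrt p / sqrt q * d\<theta> u x"
    unfolding q p .
qed

lemma parabolic_end_rev_imm:
  assumes rot: "angle_param \<sigma> R" and gen: "flow_generator R A"
    and cont: "continuous_on {0..} \<beta>" "continuous_on {0..} \<beta>'"
    and deriv: "\<And>t. t > 0 \<Longrightarrow> (\<beta> has_vector_derivative \<beta>' t) (at t)"
      "\<And>t. t > 0 \<Longrightarrow> (\<beta>' has_vector_derivative \<beta>'' t) (at t)"
    and speed: "\<And>t. t \<ge> 0 \<Longrightarrow> mink (\<beta>' t) (\<beta>' t) > 0"
    and rot_speed: "\<And>t. t \<ge> 0 \<Longrightarrow> mink (A (\<beta> t)) (A (\<beta> t)) > 0"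
    and orth: "\<And>t. t > 0 \<Longrightarrow> mink (\<beta>' t) (A (\<beta> t)) = 0"
    and length: "set_nn_integral lborel {0..} (\<lambda>t. ennreal (sqrt (mink (\<beta>' t) (\<beta>' t)))) = \<infinity>"
    and bounded: "\<And>t. t \<ge> 0 \<Longrightarrow> mink (A (\<beta> t)) (A (\<beta> t)) \<le> Q"
  shows "parabolic_end (rev_imm R \<beta>)"
proof -
  define g1 where "g1 t = mink (\<beta>' t) (\<beta>' t)" for t
  define g2 where "g2 t = mink (A (\<beta> t)) (A (\<beta> t))" for t
  define a where "a t = sqrt (g2 t) / sqrt (g1 t)" for t
  define b where "b t = sqrt (g1 t) / sqrt (g2 t)" for t
  have linA: "bounded_linear A" using gen by (simp add: flow_generator_def linear_conv_bounded_linear)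
  have "continuous_on {0..} (\<lambda>t. A (\<beta> t))"
    using continuous_on_compose[OF cont(1) linear_continuous_on[OF linA]] by (simp add: o_def)
  then have g_cont: "continuous_on {0..} g1" "continuous_on {0..} g2"
    unfolding g1_def[abs_def] g2_def[abs_def] by (intro continuous_on_mink cont(2))+
  have g_diff: "g1 differentiable (at t)" "g2 differentiable (at t)" if "t > 0" for t
  proof -
    have "((\<lambda>s. A (\<beta> s)) has_vector_derivative A (\<beta>' t)) (at t)"
      by (rule bounded_linear.has_vector_derivative[OF linA deriv(1)[OF that]])
    then show "g1 differentiable (at t)" "g2 differentiable (at t)"
      unfolding g1_def[abs_def] g2_def[abs_def] real_differentiable_def
        has_real_derivative_iff_has_vector_derivative
      using has_vector_derivative_mink deriv(2)[OF that] by blast+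
  qed
  have quotient_deriv: "((\<lambda>s. sqrt (f s) / sqrt (g s)) has_real_derivative
      deriv (\<lambda>s. sqrt (f s) / sqrt (g s)) t) (at t)"
    if diff: "f differentiable (at t)" "g differentiable (at t)" and pos: "f t > 0" "g t > 0"
    for f g and t :: real
  proof -
    obtain f' g' where "(f has_real_derivative f') (at t)" "(g has_real_derivative g') (at t)"
      using diff real_differentiable_def by blast
    then have "\<exists>D. ((\<lambda>s. sqrt (f s) / sqrt (g s)) has_real_derivative D) (at t)"
      using pos by (intro exI) (auto intro!: derivative_eq_intros)
    then show ?thesis by (simp add: DERIV_deriv_iff_real_differentiable real_differentiable_def)
  qed
  have "parabolic_coefficients a (deriv a) b (deriv b)"
    unfolding parabolic_coefficients_def
  proof (intro conjI allI impI)
    show "continuous_on {0..} b"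
      unfolding b_def using g_cont rot_speed[unfolded g2_def[symmetric]]
      by (intro continuous_intros) (auto simp: less_imp_neq[symmetric])
    show "b t > 0" if "t \<ge> 0" for t unfolding b_def g1_def g2_def using that speed rot_speed by simp
    fix t :: real assume t: "t > 0"
    then have pos: "g1 t > 0" "g2 t > 0" unfolding g1_def g2_def using speed rot_speed by simp_all
    then show "a t * b t = 1" unfolding a_def b_def by simp
    show "(a has_real_derivative deriv a t) (at t)" "(b has_real_derivative deriv b t) (at t)"
      unfolding a_def[abs_def] b_def[abs_def] using quotient_deriv g_diff[OF t] pos by blast+
  next
    fix M
    have "\<exists>T\<ge>0. integral {0..T} (\<lambda>t. sqrt (g1 t) / sqrt (g2 t)) > M"
    proof (rule integral_quotient_unbounded[where Q="sqrt Q"])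
      show "continuous_on {0..} (\<lambda>t. sqrt (g1 t))" "continuous_on {0..} (\<lambda>t. sqrt (g2 t))"
        using g_cont by (auto intro: continuous_intros)
      show "set_nn_integral lborel {0..} (\<lambda>t. ennreal (sqrt (g1 t))) = \<infinity>"
        using length unfolding g1_def .
      show "0 \<le> sqrt (g1 t)" "0 < sqrt (g2 t)" "sqrt (g2 t) \<le> sqrt Q" if "t \<ge> 0" for t
        using speed[OF that] rot_speed[OF that] bounded[OF that] unfolding g1_def g2_def by simp_all
    qed
    then show "\<exists>T\<ge>0. integral {0..T} b > M" unfolding b_def .
  qed
  moreover have "lb_flux_t (rev_imm R \<beta>) u (s, \<theta>) = a s * dt u (s, \<theta>)"
    "lb_flux_\<theta> (rev_imm R \<beta>) u (s, \<theta>) = b s * d\<theta> u (s, \<theta>)" if "s > 0" for u s \<theta>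
  proof -
    note metric = rev_imm_metric[OF rot gen deriv(1)[OF that], of \<theta>]
    have "g12 (rev_imm R \<beta>) (s, \<theta>) = 0" using metric(3) orth[OF that] by simp
    from lb_flux_diagonal[OF metric(1,2) this speed rot_speed] that
    show "lb_flux_t (rev_imm R \<beta>) u (s, \<theta>) = a s * dt u (s, \<theta>)"
      "lb_flux_\<theta> (rev_imm R \<beta>) u (s, \<theta>) = b s * d\<theta> u (s, \<theta>)"
      unfolding a_def b_def g1_def g2_def by simp_all
  qed
  ultimately show ?thesis by (rule parabolic_end_of_fluxes)
qed

theorem corollaryD:
  fixes \<sigma> P :: "(real^4) set"
    and \<beta> :: "real \<Rightarrow> real^4"
    and R :: "real \<Rightarrow> real^4 \<Rightarrow> real^4"
  assumes geod: "hgeodesic \<sigma>"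
    and plane: "hplane P" and sub: "\<sigma> \<subseteq> P"
    and curve_in: "\<forall>t\<ge>0. \<beta> t \<in> P"
    and smooth: "smooth_halfline \<beta>"
    and regular: "\<forall>t\<ge>0. vector_derivative \<beta> (at t within {0..}) \<noteq> 0"
    and infinite_length:
      "set_nn_integral lborel {0..}
         (\<lambda>t. ennreal (sqrt (mink (vector_derivative \<beta> (at t within {0..}))
                                  (vector_derivative \<beta> (at t within {0..}))))) = \<infinity>"
    and avoids: "\<forall>t\<ge>0. \<beta> t \<notin> \<sigma>"
    and rot: "angle_param \<sigma> R"
    and cpt: "\<exists>K. compact K \<and> K \<subseteq> H3 \<and> (\<forall>t\<ge>0. \<forall>\<theta>. R \<theta> (\<beta> t) \<in> K)"
  shows "parabolic_end (rev_imm R \<beta>)"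
proof -
  obtain A where gen: "flow_generator R A" using angle_param_has_generator[OF rot] .
  define \<beta>' where "\<beta>' t = vector_derivative \<beta> (at t within {0..})" for t
  note \<beta> = smooth_halfline_derivatives[OF smooth, folded \<beta>'_def]
  have profile: "\<beta> t \<in> P - \<sigma>" and on_H3: "\<beta> t \<in> H3" if "t \<ge> 0" for t
    using curve_in avoids plane that unfolding hplane_def by auto
  note field = profile_curve_rotation_field[OF geod plane sub rot gen profile \<beta>(3)]
  have speed: "mink (\<beta>' t) (\<beta>' t) > 0" if "t \<ge> 0" for t
    using H3_curve_velocity_spacelike[OF on_H3 \<beta>(1-3) that] regular that unfolding \<beta>'_def by blast
  obtain K where K: "compact K" "\<And>t. t \<ge> 0 \<Longrightarrow> \<beta> t \<in> K"
    using cpt angle_paramD(1)[OF rot] by (metis id_apply)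
  have "continuous_on K (\<lambda>x. mink (A x) (A x))"
    using gen unfolding flow_generator_def
    by (intro continuous_on_mink linear_continuous_on) (simp_all add: linear_conv_bounded_linear)
  then have "bounded ((\<lambda>x. mink (A x) (A x)) ` K)"
    by (rule compact_imp_bounded[OF compact_continuous_image[OF _ K(1)]])
  then obtain Q where "\<And>t. t \<ge> 0 \<Longrightarrow> mink (A (\<beta> t)) (A (\<beta> t)) \<le> Q"
    unfolding bounded_real using K(2) by (meson abs_le_D1 image_eqI)
  with infinite_length field speed \<beta> show ?thesis
    unfolding \<beta>'_def[symmetric] by (intro parabolic_end_rev_imm[OF rot gen]) auto
qed

end
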